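(* Let $\mathbb{K}$, $T_0,T_{-1}$, $I^+$, $P$ and $\mathcal{N}_n$ be as in the context, let $f_n=P^n(\chi_{I^+})$, and let $\lambda(I^+)$ denote the Lebesgue measure of $I^+$. Then for every $n\in\mathbb{N}$, \[\int_{I^+}(f_n(x))^2\,dx\le\lambda(I^+)\left(\frac{|\beta_1\cdots\beta_d|}{4}\right)^n\mathcal{N}_n.\]
   Context: Let $\beta\in(1,2)$ be an algebraic integer none of whose Galois conjugates has modulus $1$. List all its Galois conjugates as $\beta=\beta_1,\dots,\beta_d,\beta_{d+1},\dots,\beta_{d+s},\beta_{d+s+1}$, where $|\beta_1|,\dots,|\beta_d|>1$, $|\beta_{d+1}|,\dots,|\beta_{d+s}|<1$, and $\beta_{d+s+1}$ is real with $|\beta_{d+s+1}|>1$. For $z\in\mathbb{C}$ let $\mathbb{F}_z=\mathbb{R}$ if $z\in\mathbb{R}$ and $\mathbb{F}_z=\mathbb{C}$ otherwise, and let $\mathbb{K}=\prod_{j=1}^d\mathbb{F}_{\beta_j}$ with Lebesgue measure ($\mathbb{C}\cong\mathbb{R}^2$). For $i\in\mathbb{Z}$ let $T_i(x_1,\dots,x_d)=(\beta_1x_1+i,\dots,\beta_dx_d+i)$. For $j\le d$ let $I^+_{\beta_j}=[0,\frac{1}{\beta_j-1}]$ if $\beta_j>1$, $I^+_{\beta_j}=\{x\in\mathbb{R}:|x|\le\frac{1}{|\beta_j|-1}\}$ if $\beta_j<-1$, $I^+_{\beta_j}=\{z\in\mathbb{C}:|z|\le\frac{1}{|\beta_j|-1}\}$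 if $\beta_j\notin\mathbb{R}$, and $I^+=\prod_{j=1}^d I^+_{\beta_j}$. The operator $P$ acts on functions $f:\mathbb{K}\to\mathbb{R}$ by $Pf=\frac{|\beta_1\cdots\beta_d|}{2}(f\circ T_0+f\circ T_{-1})$. The number of overlaps at level $n$ is \[\mathcal{N}_n=\#\left\{(a_1\cdots a_n,b_1\cdots b_n)\in\{0,-1\}^{n}\times\{0,-1\}^n: T_{a_1}^{-1}\circ\cdots\circ T_{a_n}^{-1}(I^+)\cap T_{b_1}^{-1}\circ\cdots\circ T_{b_n}^{-1}(I^+)\neq\varnothing\right\}.\] *)

theory Defs
  imports "HOL-Analysis.Analysis" "HOL-Computational_Algebra.Polynomial"
begin

text \<open>Galois conjugates of an algebraic number x over Q: the roots of its minimal
polynomial, i.e. the complex z vanishing on every rational polynomial that vanishes at x.\<close>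
definition galois_conjugates :: "complex \<Rightarrow> complex set" where
  "galois_conjugates x =
     {z. \<forall>p :: rat poly. poly (map_poly of_rat p) x = 0 \<longrightarrow> poly (map_poly of_rat p) z = 0}"

text \<open>The space K = prod_{j=1..d} F_{b j}, realised as extensional functions
{1..d} -> complex, with Lebesgue measure on each factor (real line embedded in C
for real b j, planar Lebesgue measure on C otherwise).\<close>
definition Kmeasure :: "(nat \<Rightarrow> complex) \<Rightarrow> nat \<Rightarrow> (nat \<Rightarrow> complex) measure" where
  "Kmeasure b d = PiM {1..d}
     (\<lambda>j. if b j \<in> \<real> then distr lborel borel complex_of_real else (lborel :: complex measure))"

definition Tmap :: "(nat \<Rightarrow> complex) \<Rightarrow> nat \<Rightarrow> int \<Rightarrow> (nat \<Rightarrow> complex) \<Rightarrow> (nat \<Rightarrow> complex)" where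
  "Tmap b d i x = restrict (\<lambda>j. b j * x j + of_int i) {1..d}"

definition Tinv :: "(nat \<Rightarrow> complex) \<Rightarrow> nat \<Rightarrow> int \<Rightarrow> (nat \<Rightarrow> complex) \<Rightarrow> (nat \<Rightarrow> complex)" where
  "Tinv b d i y = restrict (\<lambda>j. (y j - of_int i) / b j) {1..d}"

definition Iplus_factor :: "complex \<Rightarrow> complex set" where
  "Iplus_factor z =
     (if z \<in> \<real> \<and> Re z > 1 then {complex_of_real t | t. 0 \<le> t \<and> t \<le> 1 / (Re z - 1)}
      else if z \<in> \<real> \<and> Re z < -1 then {complex_of_real t | t. \<bar>t\<bar> \<le> 1 / (\<bar>Re z\<bar> - 1)}
      else cball 0 (1 / (cmod z - 1)))"

definition Iplus :: "(nat \<Rightarrow> complex) \<Rightarrow> nat \<Rightarrow> (nat \<Rightarrow> complex) set" where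
  "Iplus b d = PiE {1..d} (\<lambda>j. Iplus_factor (b j))"

definition Pop :: "(nat \<Rightarrow> complex) \<Rightarrow> nat \<Rightarrow> ((nat \<Rightarrow> complex) \<Rightarrow> real) \<Rightarrow> ((nat \<Rightarrow> complex) \<Rightarrow> real)" where
  "Pop b d f = (\<lambda>x. cmod (\<Prod>j\<in>{1..d}. b j) / 2 * (f (Tmap b d 0 x) + f (Tmap b d (-1) x)))"

definition words :: "nat \<Rightarrow> int list set" where
  "words n = {w. length w = n \<and> set w \<subseteq> {0, -1}}"

definition Tinv_word :: "(nat \<Rightarrow> complex) \<Rightarrow> nat \<Rightarrow> int list \<Rightarrow> (nat \<Rightarrow> complex) \<Rightarrow> (nat \<Rightarrow> complex)" where
  "Tinv_word b d w = foldr (\<lambda>i g. Tinv b d i \<circ> g) w id"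

definition overlaps :: "(nat \<Rightarrow> complex) \<Rightarrow> nat \<Rightarrow> nat \<Rightarrow> nat" where
  "overlaps b d n = card {(a, c). a \<in> words n \<and> c \<in> words n \<and>
      Tinv_word b d a ` Iplus b d \<inter> Tinv_word b d c ` Iplus b d \<noteq> {}}"

end

theory Submission
  imports Defs
begin

(* Expanding P^n gives f_n(x) = (|b_1 ... b_d| / 2)^n * sum over words w of length n of
   chi_{A_w}(x), where A_w = T_{a_1}^-1 ... T_{a_n}^-1 (I^+). Squaring turns this into a sum over
   pairs of words of chi_{A_v inter A_w}, in which only overlapping pairs contribute, each by at
   most lambda(A_v). Coordinatewise A_w is the preimage of I^+_{b_j} under z -> b_j^n z + word_eval w b_j, so
   lambda(A_w) <= lambda(I^+) / |b_1 ... b_d|^n, and the factors combine to (|b_1 ... b_d| / 4)^n. *)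

lemma one_le_norm_prod:
  fixes f :: "'i \<Rightarrow> 'a :: {real_normed_div_algebra, comm_semiring_1}"
  assumes "\<And>i. i \<in> A \<Longrightarrow> 1 \<le> norm (f i)"
  shows "1 \<le> norm (\<Prod>i\<in>A. f i)"
  unfolding prod_norm[symmetric] using assms by (rule prod_ge_1)

lemma set_integral_square_sum_indicator_le:
  fixes M :: "'a measure" and A :: "'i \<Rightarrow> 'a set" and a :: real
  assumes "finite W" and "I \<in> sets M"
    and "\<And>w. w \<in> W \<Longrightarrow> A w \<in> fmeasurable M" and "\<And>w. w \<in> W \<Longrightarrow> measure M (A w) \<le> a"
  shows "(LINT x:I|M. (\<Sum>w\<in>W. indicator (A w) x)\<^sup>2)
    \<le> a * real (card {(v, w). v \<in> W \<and> w \<in> W \<and> A v \<inter> A w \<noteq> {}})"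
proof -
  define Overlap where "Overlap = {(v, w). v \<in> W \<and> w \<in> W \<and> A v \<inter> A w \<noteq> {}}"
  define S where "S p = A (fst p) \<inter> A (snd p) \<inter> I" for p
  have "Overlap \<subseteq> W \<times> W" by (auto simp: Overlap_def)
  then have "finite Overlap" using assms(1) finite_subset by blast
  have S_fmeasurable: "S p \<in> fmeasurable M" if "p \<in> Overlap" for p
    using that assms(2,3) by (auto simp: S_def Overlap_def intro!: fmeasurable_Int_fmeasurable)
  have square:
    "indicator I x * (\<Sum>w\<in>W. indicator (A w) x)\<^sup>2 = (\<Sum>p\<in>Overlap. indicator (S p) x :: real)" for x
  proof -
    have "(\<Sum>w\<in>W. indicator (A w) x)\<^sup>2 = (\<Sum>p\<in>W \<times> W. indicator (A (fst p) \<inter> A (snd p)) x :: real)"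
      by (simp add: power2_eq_square sum_product sum.cartesian_product indicator_inter_arith case_prod_beta')
    also have "\<dots> = (\<Sum>p\<in>Overlap. indicator (A (fst p) \<inter> A (snd p)) x)"
      using \<open>Overlap \<subseteq> W \<times> W\<close> assms(1) by (intro sum.mono_neutral_right) (auto simp: Overlap_def)
    finally show ?thesis
      by (simp add: S_def sum_distrib_left indicator_inter_arith mult.commute)
  qed
  have "(LINT x:I|M. (\<Sum>w\<in>W. indicator (A w) x)\<^sup>2) = (\<Sum>p\<in>Overlap. measure M (S p))"
    using S_fmeasurable \<open>finite Overlap\<close>
    by (simp add: set_lebesgue_integral_def square fmeasurable_def less_top[symmetric]
        Bochner_Integration.integral_sum)
  also have "\<dots> \<le> (\<Sum>p\<in>Overlap. a)"
  proof (rule sum_mono)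
    fix p assume "p \<in> Overlap"
    then have "measure M (S p) \<le> measure M (A (fst p))"
      using S_fmeasurable assms(3) by (intro measure_mono_fmeasurable) (auto simp: S_def Overlap_def)
    also have "\<dots> \<le> a"
      using \<open>p \<in> Overlap\<close> assms(4) by (auto simp: Overlap_def)
    finally show "measure M (S p) \<le> a" .
  qed
  finally show ?thesis
    by (simp add: Overlap_def mult.commute)
qed

(* Tmap_word [a_1, ..., a_n] = T_{a_n} o ... o T_{a_1}, the inverse of Tinv_word [a_1, ..., a_n]. *)
definition Tmap_word :: "(nat \<Rightarrow> complex) \<Rightarrow> nat \<Rightarrow> int list \<Rightarrow> (nat \<Rightarrow> complex) \<Rightarrow> (nat \<Rightarrow> complex)" where
  "Tmap_word b d w = foldr (\<lambda>i g. g \<circ> Tmap b d i) w id"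

primrec word_eval :: "int list \<Rightarrow> complex \<Rightarrow> complex" where
  "word_eval [] z = 0"
| "word_eval (i # w) z = of_int i * z ^ length w + word_eval w z"

lemma Tmap_word_Nil [simp]: "Tmap_word b d [] x = x"
  by (simp add: Tmap_word_def)

lemma Tmap_word_Cons [simp]: "Tmap_word b d (i # w) x = Tmap_word b d w (Tmap b d i x)"
  by (simp add: Tmap_word_def)

lemma Tinv_word_Nil [simp]: "Tinv_word b d [] y = y"
  by (simp add: Tinv_word_def)

lemma Tinv_word_Cons [simp]: "Tinv_word b d (i # w) y = Tinv b d i (Tinv_word b d w y)"
  by (simp add: Tinv_word_def)

lemma words_Suc: "words (Suc n) = (\<lambda>w. 0 # w) ` words n \<union> (\<lambda>w. (-1) # w) ` words n"
  by (auto simp: words_def length_Suc_conv)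

lemma length_words: "w \<in> words n \<Longrightarrow> length w = n"
  by (simp add: words_def)

lemma finite_words: "finite (words n)"
  using finite_lists_length_eq[of "{0, -1 :: int}" n] by (simp add: words_def conj_commute)

lemma Pop_funpow:
  "(Pop b d ^^ n) f x = (cmod (\<Prod>j\<in>{1..d}. b j) / 2) ^ n * (\<Sum>w\<in>words n. f (Tmap_word b d w x))"
proof (induction n arbitrary: x)
  case 0
  have "words 0 = {[]}" by (auto simp: words_def)
  then show ?case by simp
next
  case (Suc n)
  have "(\<Sum>w\<in>words (Suc n). f (Tmap_word b d w x)) =
     (\<Sum>w\<in>words n. f (Tmap_word b d w (Tmap b d 0 x))) + (\<Sum>w\<in>words n. f (Tmap_word b d w (Tmap b d (-1) x)))"
    unfolding words_Suc
    by (subst sum.union_disjoint) (auto simp: finite_words sum.reindex inj_on_def)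
  then show ?case
    by (simp add: Pop_def[of b d "(Pop b d ^^ n) f"] Suc algebra_simps)
qed

lemma Tmap_word_extensional:
  "x \<in> extensional {1..d} \<Longrightarrow> Tmap_word b d w x \<in> extensional {1..d}"
  by (induction w arbitrary: x) (auto simp: Tmap_def)

lemma Tinv_word_extensional:
  "y \<in> extensional {1..d} \<Longrightarrow> Tinv_word b d w y \<in> extensional {1..d}"
  by (induction w) (auto simp: Tinv_def)

lemma Tmap_word_Tinv_word:
  assumes "\<forall>j\<in>{1..d}. b j \<noteq> 0" and "y \<in> extensional {1..d}"
  shows "Tmap_word b d w (Tinv_word b d w y) = y"
  using assms(2)
proof (induction w arbitrary: y)
  case (Cons i w)
  have "Tmap b d i (Tinv b d i (Tinv_word b d w y)) = Tinv_word b d w y"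
    using assms(1) Tinv_word_extensional[OF Cons.prems]
    by (auto simp: Tmap_def Tinv_def extensional_def fun_eq_iff)
  then show ?case using Cons by simp
qed simp

lemma Tinv_word_Tmap_word:
  assumes "\<forall>j\<in>{1..d}. b j \<noteq> 0" and "x \<in> extensional {1..d}"
  shows "Tinv_word b d w (Tmap_word b d w x) = x"
  using assms(2)
proof (induction w arbitrary: x)
  case (Cons i w)
  have "Tmap b d i x \<in> extensional {1..d}" by (simp add: Tmap_def)
  then have "Tinv_word b d w (Tmap_word b d w (Tmap b d i x)) = Tmap b d i x"
    using Cons.IH by blast
  then show ?case
    using assms(1) Cons.prems by (auto simp: Tmap_def Tinv_def extensional_def fun_eq_iff)
qed simp

lemma Tinv_word_image_Iplus:
  assumes "\<forall>j\<in>{1..d}. b j \<noteq> 0"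
  shows "Tinv_word b d w ` Iplus b d = {x \<in> extensional {1..d}. Tmap_word b d w x \<in> Iplus b d}"
proof -
  have ext: "Iplus b d \<subseteq> extensional {1..d}" by (auto simp: Iplus_def PiE_def)
  show ?thesis
  proof safe
    fix y assume "y \<in> Iplus b d"
    then show "Tinv_word b d w y \<in> extensional {1..d}" and "Tmap_word b d w (Tinv_word b d w y) \<in> Iplus b d"
      using ext Tinv_word_extensional Tmap_word_Tinv_word[OF assms] by auto
  next
    fix x assume "x \<in> extensional {1..d}" and "Tmap_word b d w x \<in> Iplus b d"
    then show "x \<in> Tinv_word b d w ` Iplus b d"
      by (metis Tinv_word_Tmap_word[OF assms] image_eqI)
  qed
qed

lemma indicator_Iplus_Tmap_word:
  assumes "\<forall>j\<in>{1..d}. b j \<noteq> 0" and "x \<in> Iplus b d"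
  shows "indicator (Iplus b d) (Tmap_word b d w x) = (indicator (Tinv_word b d w ` Iplus b d) x :: real)"
proof -
  have "x \<in> extensional {1..d}"
    using assms(2) by (simp add: Iplus_def PiE_def)
  then show ?thesis
    by (simp add: Tinv_word_image_Iplus[OF assms(1)] indicator_def)
qed

lemma Pop_funpow_indicator_Iplus:
  assumes "\<forall>j\<in>{1..d}. b j \<noteq> 0" and "x \<in> Iplus b d"
  shows "(Pop b d ^^ n) (indicator (Iplus b d)) x =
    (cmod (\<Prod>j\<in>{1..d}. b j) / 2) ^ n * (\<Sum>w\<in>words n. indicator (Tinv_word b d w ` Iplus b d) x)"
  using assms by (simp add: Pop_funpow indicator_Iplus_Tmap_word)

lemma Tmap_word_apply:
  "j \<in> {1..d} \<Longrightarrow> Tmap_word b d w x j = b j ^ length w * x j + word_eval w (b j)"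
  by (induction w arbitrary: x) (simp_all add: Tmap_def algebra_simps)

lemma word_eval_real: "z \<in> \<real> \<Longrightarrow> word_eval w z \<in> \<real>"
  by (induction w) auto

lemma Tinv_word_image_Iplus_PiE:
  assumes "\<forall>j\<in>{1..d}. b j \<noteq> 0"
  shows "Tinv_word b d w ` Iplus b d =
    PiE {1..d} (\<lambda>j. {z. b j ^ length w * z + word_eval w (b j) \<in> Iplus_factor (b j)})"
proof -
  have "Tmap_word b d w x \<in> Iplus b d \<longleftrightarrow>
      (\<forall>j\<in>{1..d}. b j ^ length w * x j + word_eval w (b j) \<in> Iplus_factor (b j))"
    if "x \<in> extensional {1..d}" for x
    using Tmap_word_extensional[OF that] by (simp add: Iplus_def PiE_iff Tmap_word_apply)
  then show ?thesis
    unfolding Tinv_word_image_Iplus[OF assms] by (simp add: set_eq_iff PiE_iff conj_commute cong: conj_cong)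
qed

definition factor_measure :: "complex \<Rightarrow> complex measure" where
  "factor_measure z = (if z \<in> \<real> then distr lborel borel complex_of_real else lborel)"

lemma sets_factor_measure [simp, measurable_cong]: "sets (factor_measure z) = sets borel"
  by (simp add: factor_measure_def)

lemma space_factor_measure [simp]: "space (factor_measure z) = UNIV"
  by (simp add: factor_measure_def)

lemma Kmeasure_eq_PiM: "Kmeasure b d = PiM {1..d} (\<lambda>j. factor_measure (b j))"
  by (simp add: Kmeasure_def factor_measure_def)

lemma emeasure_factor_measure_cball_finite: "emeasure (factor_measure z) (cball 0 r) < \<infinity>"
proof (cases "z \<in> \<real>")
  case True
  have "complex_of_real -` cball 0 r = cball 0 r"
    by (simp add: vimage_def cball_def)
  then have "emeasure (factor_measure z) (cball 0 r) = emeasure lborel (cball (0 :: real) r)"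
    using True by (simp add: factor_measure_def emeasure_distr)
  also have "\<dots> < \<infinity>"
    by (rule emeasure_lborel_cball_finite)
  finally show ?thesis .
next
  case False
  then show ?thesis
    using emeasure_lborel_cball_finite[of "0 :: complex" r] by (simp add: factor_measure_def)
qed

lemma emeasure_factor_measure_bounded_finite:
  assumes "bounded S"
  shows "emeasure (factor_measure z) S < \<infinity>"
proof -
  obtain r where "S \<subseteq> ball 0 r"
    using bounded_subset_ballD[OF assms] by blast
  then have "emeasure (factor_measure z) S \<le> emeasure (factor_measure z) (cball 0 r)"
    by (intro emeasure_mono) (use ball_subset_cball in auto)
  also have "\<dots> < \<infinity>"
    by (rule emeasure_factor_measure_cball_finite)
  finally show ?thesis .
qed

lemma sigma_finite_factor_measure: "sigma_finite_measure (factor_measure z)"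
proof
  let ?A = "range (\<lambda>n::nat. cball (0 :: complex) (real n))"
  show "\<exists>A. countable A \<and> A \<subseteq> sets (factor_measure z) \<and> \<Union> A = space (factor_measure z) \<and>
      (\<forall>a\<in>A. emeasure (factor_measure z) a \<noteq> \<infinity>)"
  proof (intro exI conjI)
    show "\<Union> ?A = space (factor_measure z)"
      by (auto simp: real_arch_simple)
    show "\<forall>a\<in>?A. emeasure (factor_measure z) a \<noteq> \<infinity>"
      using emeasure_factor_measure_cball_finite[of z] by (auto simp: less_top[symmetric])
  qed auto
qed

lemma product_sigma_finite_factor_measure: "product_sigma_finite (\<lambda>j. factor_measure (b j))"
  by (simp add: product_sigma_finite_def sigma_finite_factor_measure)

lemma compact_Iplus_factor: "compact (Iplus_factor z)"
proof -
  have segment: "{complex_of_real t | t. 0 \<le> t \<and> t \<le> L} = complex_of_real ` {0..L}"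
    and symmetric_segment: "{complex_of_real t | t. \<bar>t\<bar> \<le> L} = complex_of_real ` {-L..L}" for L
    by force+
  have "compact (complex_of_real ` {l..u})" for l u
    by (intro compact_continuous_image continuous_intros compact_Icc)
  then show ?thesis
    unfolding Iplus_factor_def segment symmetric_segment by auto
qed

lemma Iplus_factor_in_borel [measurable]: "Iplus_factor z \<in> sets borel"
  by (simp add: borel_compact compact_Iplus_factor)

lemma emeasure_distr_of_real_affine_preimage:
  fixes a e :: real
  assumes "a \<noteq> 0" and [measurable]: "B \<in> sets borel"
  shows "emeasure (distr lborel borel complex_of_real) B =
    ennreal \<bar>a\<bar> * emeasure (distr lborel borel complex_of_real) {x. of_real a * x + of_real e \<in> B}"
proof -
  define S where "S = complex_of_real -` B"
  have [measurable]: "S \<in> sets borel"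
    using measurable_sets_borel[of complex_of_real borel B] by (simp add: S_def)
  have "complex_of_real -` {x. of_real a * x + of_real e \<in> B} = (\<lambda>t. e + a * t) -` S"
    by (auto simp: S_def add.commute)
  moreover have "emeasure lborel S = ennreal \<bar>a\<bar> * emeasure lborel ((\<lambda>t. e + a * t) -` S)"
    by (subst lborel_real_affine[OF assms(1), of e]) (simp add: emeasure_density_const emeasure_distr)
  ultimately show ?thesis
    by (simp add: emeasure_distr S_def)
qed

lemma emeasure_cball_affine_preimage:
  fixes a e :: complex
  assumes "a \<noteq> 0" and "0 \<le> r"
  shows "emeasure lborel (cball (0 :: complex) r) =
    ennreal (cmod a ^ 2) * emeasure lborel {x. a * x + e \<in> cball 0 r}"
proof -
  have "cmod (a * x + e) = cmod a * dist x (- e / a)" for x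
  proof -
    have "a * x + e = a * (x - - e / a)" using assms(1) by (simp add: field_simps)
    then show ?thesis by (simp add: norm_mult dist_norm)
  qed
  then have preimage: "{x. a * x + e \<in> cball 0 r} = cball (- e / a) (r / cmod a)"
    using assms(1) by (auto simp: field_simps dist_commute)
  have "emeasure lborel (cball (0 :: complex) r) = ennreal (unit_ball_vol 2 * r ^ 2)"
    using emeasure_cball[OF assms(2), where c = "0 :: complex"] by simp
  also have "\<dots> = ennreal (cmod a ^ 2) * ennreal (unit_ball_vol 2 * (r / cmod a) ^ 2)"
    using assms(1) by (simp add: ennreal_mult[symmetric] field_simps)
  also have "\<dots> = ennreal (cmod a ^ 2) * emeasure lborel (cball (- e / a) (r / cmod a))"
    using emeasure_cball[of "r / cmod a" "- e / a"] assms by simp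
  finally show ?thesis
    unfolding preimage .
qed

(* On a non-real factor the Jacobian is |z|^(2m), which dominates |z|^m since |z| >= 1. *)
lemma emeasure_Iplus_factor_affine_preimage_le:
  assumes "1 \<le> cmod z" and "z \<in> \<real> \<Longrightarrow> e \<in> \<real>"
  shows "ennreal (cmod z ^ m) * emeasure (factor_measure z) {x. z ^ m * x + e \<in> Iplus_factor z}
    \<le> emeasure (factor_measure z) (Iplus_factor z)"
proof (cases "z \<in> \<real>")
  case True
  then obtain t u where z: "z = of_real t" and e: "e = of_real u"
    using assms(2) Reals_cases by metis
  have "t ^ m \<noteq> 0" using assms(1) z by auto
  moreover have "complex_of_real (t ^ m) = z ^ m" and "\<bar>t ^ m\<bar> = cmod z ^ m"
    by (simp_all add: z power_abs)
  ultimately have "emeasure (factor_measure z) (Iplus_factor z) =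
      ennreal (cmod z ^ m) * emeasure (factor_measure z) {x. z ^ m * x + e \<in> Iplus_factor z}"
    using emeasure_distr_of_real_affine_preimage[of "t ^ m" "Iplus_factor z" u] True
    by (simp add: factor_measure_def e)
  then show ?thesis by simp
next
  case False
  have "z ^ m \<noteq> 0" and "0 \<le> 1 / (cmod z - 1)" using assms(1) by auto
  from emeasure_cball_affine_preimage[OF this, of e]
  have "emeasure (factor_measure z) (Iplus_factor z) =
      ennreal ((cmod z ^ m)\<^sup>2) * emeasure (factor_measure z) {x. z ^ m * x + e \<in> Iplus_factor z}"
    using False by (simp add: factor_measure_def Iplus_factor_def norm_power)
  moreover have "cmod z ^ m \<le> (cmod z ^ m)\<^sup>2"
    using one_le_power[OF assms(1), of m] by (simp add: power2_eq_square mult_le_cancel_left1)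
  ultimately show ?thesis
    by (simp add: mult_right_mono ennreal_leI)
qed

lemma Iplus_in_sets_Kmeasure: "Iplus b d \<in> sets (Kmeasure b d)"
  unfolding Iplus_def Kmeasure_eq_PiM by (rule sets_PiM_I_finite) auto

lemma emeasure_Iplus_finite: "emeasure (Kmeasure b d) (Iplus b d) < \<infinity>"
proof -
  interpret product_sigma_finite "\<lambda>j. factor_measure (b j)"
    by (rule product_sigma_finite_factor_measure)
  have "emeasure (Kmeasure b d) (Iplus b d) =
      (\<Prod>j\<in>{1..d}. emeasure (factor_measure (b j)) (Iplus_factor (b j)))"
    unfolding Iplus_def Kmeasure_eq_PiM by (rule emeasure_PiM) auto
  moreover have "emeasure (factor_measure z) (Iplus_factor z) < \<infinity>" for z
    using compact_Iplus_factor compact_imp_bounded emeasure_factor_measure_bounded_finite by blast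
  ultimately show ?thesis
    by (simp add: less_top[symmetric] ennreal_prod_eq_top)
qed

lemma
  assumes "\<forall>j\<in>{1..d}. 1 \<le> cmod (b j)"
  shows Tinv_word_image_in_sets_Kmeasure: "Tinv_word b d w ` Iplus b d \<in> sets (Kmeasure b d)"
    and emeasure_Tinv_word_image_le:
      "ennreal (cmod (\<Prod>j\<in>{1..d}. b j) ^ length w) * emeasure (Kmeasure b d) (Tinv_word b d w ` Iplus b d)
        \<le> emeasure (Kmeasure b d) (Iplus b d)"
proof -
  interpret product_sigma_finite "\<lambda>j. factor_measure (b j)"
    by (rule product_sigma_finite_factor_measure)
  define m where "m = length w"
  define F where "F j = {z. b j ^ m * z + word_eval w (b j) \<in> Iplus_factor (b j)}" for j
  have F_borel: "F j \<in> sets borel" for j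
    unfolding F_def by measurable
  have image_eq: "Tinv_word b d w ` Iplus b d = PiE {1..d} F"
    unfolding F_def m_def using assms by (intro Tinv_word_image_Iplus_PiE) auto
  show "Tinv_word b d w ` Iplus b d \<in> sets (Kmeasure b d)"
    unfolding image_eq Kmeasure_eq_PiM using F_borel by (intro sets_PiM_I_finite) auto
  have "ennreal (cmod (\<Prod>j\<in>{1..d}. b j) ^ m) * emeasure (Kmeasure b d) (Tinv_word b d w ` Iplus b d)
      = (\<Prod>j\<in>{1..d}. ennreal (cmod (b j) ^ m) * emeasure (factor_measure (b j)) (F j))"
    unfolding image_eq Kmeasure_eq_PiM using F_borel
    by (simp add: emeasure_PiM prod.distrib prod_ennreal prod_norm[symmetric] prod_power_distrib)
  also have "\<dots> \<le> (\<Prod>j\<in>{1..d}. emeasure (factor_measure (b j)) (Iplus_factor (b j)))"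
    unfolding F_def using assms word_eval_real
    by (intro prod_mono_ennreal emeasure_Iplus_factor_affine_preimage_le) auto
  also have "\<dots> = emeasure (Kmeasure b d) (Iplus b d)"
    unfolding Iplus_def Kmeasure_eq_PiM by (rule emeasure_PiM[symmetric]) auto
  finally show "ennreal (cmod (\<Prod>j\<in>{1..d}. b j) ^ length w) *
      emeasure (Kmeasure b d) (Tinv_word b d w ` Iplus b d) \<le> emeasure (Kmeasure b d) (Iplus b d)"
    by (simp add: m_def)
qed

lemma
  assumes "\<forall>j\<in>{1..d}. 1 \<le> cmod (b j)"
  shows fmeasurable_Tinv_word_image: "Tinv_word b d w ` Iplus b d \<in> fmeasurable (Kmeasure b d)"
    and measure_Tinv_word_image_le:
      "measure (Kmeasure b d) (Tinv_word b d w ` Iplus b d)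
        \<le> measure (Kmeasure b d) (Iplus b d) / cmod (\<Prod>j\<in>{1..d}. b j) ^ length w"
proof -
  let ?K = "Kmeasure b d" and ?A = "Tinv_word b d w ` Iplus b d" and ?I = "Iplus b d"
  let ?c = "cmod (\<Prod>j\<in>{1..d}. b j) ^ length w"
  have "1 \<le> ?c"
    using assms by (intro one_le_power one_le_norm_prod) auto
  then have "ennreal 1 * emeasure ?K ?A \<le> ennreal ?c * emeasure ?K ?A"
    by (intro mult_right_mono ennreal_leI) auto
  then have "emeasure ?K ?A \<le> ennreal ?c * emeasure ?K ?A"
    by simp
  also have "\<dots> \<le> emeasure ?K ?I"
    using assms by (rule emeasure_Tinv_word_image_le)
  also have "\<dots> < \<infinity>"
    by (rule emeasure_Iplus_finite)
  finally show A_fmeasurable: "?A \<in> fmeasurable ?K"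
    using assms by (intro fmeasurableI Tinv_word_image_in_sets_Kmeasure)
  have "ennreal (?c * measure ?K ?A) = ennreal ?c * emeasure ?K ?A"
    using A_fmeasurable \<open>1 \<le> ?c\<close> by (simp add: ennreal_mult fmeasurable_def emeasure_eq_ennreal_measure less_top)
  also have "\<dots> \<le> emeasure ?K ?I"
    using assms by (rule emeasure_Tinv_word_image_le)
  also have "\<dots> = ennreal (measure ?K ?I)"
    using emeasure_Iplus_finite by (simp add: emeasure_eq_ennreal_measure less_top)
  finally have "?c * measure ?K ?A \<le> measure ?K ?I"
    by (simp add: ennreal_le_iff)
  then show "measure ?K ?A \<le> measure ?K ?I / ?c"
    using \<open>1 \<le> ?c\<close> by (simp add: pos_le_divide_eq mult.commute)
qed

theorem proposition2p2:
  fixes \<beta> :: real and b :: "nat \<Rightarrow> complex" and d s n :: nat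
  assumes "1 \<le> d" and "1 < \<beta>" and "\<beta> < 2"
    and "algebraic_int \<beta>"
    and "\<forall>z\<in>galois_conjugates (complex_of_real \<beta>). cmod z \<noteq> 1"
    and "b 1 = complex_of_real \<beta>"
    and "bij_betw b {1..d+s+1} (galois_conjugates (complex_of_real \<beta>))"
    and "\<forall>j\<in>{1..d}. cmod (b j) > 1"
    and "\<forall>j\<in>{d+1..d+s}. cmod (b j) < 1"
    and "b (d+s+1) \<in> \<real>" and "cmod (b (d+s+1)) > 1"
  shows "(LINT x : Iplus b d | Kmeasure b d. ((Pop b d ^^ n) (indicator (Iplus b d)) x)\<^sup>2)
           \<le> measure (Kmeasure b d) (Iplus b d)
              * (cmod (\<Prod>j\<in>{1..d}. b j) / 4) ^ n * real (overlaps b d n)"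
proof -
  \<comment> \<open>Of the hypotheses, only the expansion of b 1, ..., b d is needed.\<close>
  have expanding: "\<forall>j\<in>{1..d}. 1 \<le> cmod (b j)" and nonzero: "\<forall>j\<in>{1..d}. b j \<noteq> 0"
    using assms(8) by auto
  define c where "c = cmod (\<Prod>j\<in>{1..d}. b j)"
  define A where "A w = Tinv_word b d w ` Iplus b d" for w
  have "1 \<le> c"
    unfolding c_def using expanding by (intro one_le_norm_prod) auto
  have "(LINT x : Iplus b d | Kmeasure b d. ((Pop b d ^^ n) (indicator (Iplus b d)) x)\<^sup>2)
      = (LINT x : Iplus b d | Kmeasure b d. ((c / 2) ^ n)\<^sup>2 * (\<Sum>w\<in>words n. indicator (A w) x)\<^sup>2)"
    by (intro set_lebesgue_integral_cong Iplus_in_sets_Kmeasure)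
      (simp add: Pop_funpow_indicator_Iplus[OF nonzero] c_def A_def power_mult_distrib)
  also have "\<dots> = ((c / 2) ^ n)\<^sup>2 * (LINT x : Iplus b d | Kmeasure b d. (\<Sum>w\<in>words n. indicator (A w) x)\<^sup>2)"
    by (rule set_integral_mult_right)
  also have "\<dots> \<le> ((c / 2) ^ n)\<^sup>2 * (measure (Kmeasure b d) (Iplus b d) / c ^ n * real (overlaps b d n))"
    unfolding overlaps_def A_def
    using measure_Tinv_word_image_le[OF expanding] fmeasurable_Tinv_word_image[OF expanding]
    by (intro mult_left_mono set_integral_square_sum_indicator_le)
      (auto simp: finite_words Iplus_in_sets_Kmeasure c_def dest!: length_words)
  also have "((c / 2) ^ n)\<^sup>2 = (c / 4) ^ n * c ^ n"
    by (simp add: power_mult_distrib[symmetric] power2_eq_square)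
  finally show ?thesis
    unfolding c_def[symmetric] using \<open>1 \<le> c\<close> by (simp add: mult_ac)
qed

end
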